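(* Let $\omega\in\mathbb{F}_8$ be a root of $y^3+y+1$, let $m\in\mathbb{N}$, let $L,M,N$ be nonempty subsets of $[m]$, and let $D=\Delta_L+\omega\Delta_M+\omega^2\Delta_N\subseteq\mathbb{F}_8^m$, so that $D^{(2)}=\{(d_1,d_3,d_2): d_1\in\Delta_L,d_2\in\Delta_M,d_3\in\Delta_N\}\subseteq(\mathbb{F}_2^m)^3$. Let $s=|L|+|M|+|N|$. Then the binary code $C^{(2)}_{D^*}=\{c^{(2)}_{D^*}(\alpha,\beta,\gamma):\alpha,\beta,\gamma\in\mathbb{F}_2^m\}$, where $c^{(2)}_{D^*}(\alpha,\beta,\gamma)=((\alpha,\beta,\gamma)\cdot(d_1,d_3,d_2))_{(d_1,d_3,d_2)\in D^{(2)}\setminus\{0\}}$, is a $[2^s-1,\,s,\,2^{s-1}]$ linear $1$-weight code over $\mathbb{F}_2$, with exactly $1$ codeword of weight $0$ and $2^s-1$ codewords of weight $2^{s-1}$. In particular, it is a minimal code. Further, it is a Griesmer code and hence distance optimal. If $Z_i=|\{(\alpha,\beta,\gamma)\in(\mathbb{F}_2^m)^3: wt(c^{(2)}_{D^*}(\alpha,\beta,\gamma))=i\}|$, then $Z_0=2^{3m-s}$ and $Z_{2^{s-1}}=2^{3m-s}(2^s-1)$.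
   Context: $[m]=\{1,\dots,m\}$; $\Delta_L=\{w\in\mathbb{F}_2^m:\{i:w_i\ne0\}\subseteq L\}$; $A+\omega B+\omega^2C=\{a+\omega b+\omega^2c: a\in A,b\in B,c\in C\}$. The dot product on $(\mathbb{F}_2^m)^3=\mathbb{F}_2^{3m}$ is the standard one. (This code is the subfield code, with respect to the basis $\{1,\omega,\omega^2\}$, of the octanary code $C_{D^*}=\{(v\cdot d)_{d\in D\setminus\{0\}}:v\in\mathbb{F}_8^m\}$.) A code is $1$-weight if all nonzero codewords have the same Hamming weight; minimal if for every nonzero codeword $c$, each nonzero codeword $c'$ with $\mathrm{Supp}(c')\subseteq\mathrm{Supp}(c)$ is a scalar multiple of $c$; Griesmer if its parameters $[n,k,d]$ over $\mathbb{F}_q$ satisfy $\sum_{i=0}^{k-1}\lceil d/q^i\rceil=n$; distance optimal if no $[n,k,d+1]$ linear code exists. *)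

theory Defs
  imports Complex_Main "HOL-Library.Z2"
begin

definition words :: "'i set \<Rightarrow> ('i \<Rightarrow> bit) set" where
  "words I = {c. \<forall>i. i \<notin> I \<longrightarrow> c i = 0}"

definition zero_word :: "'i \<Rightarrow> bit" where
  "zero_word = (\<lambda>i. 0)"

definition supp :: "('i \<Rightarrow> bit) \<Rightarrow> 'i set" where
  "supp c = {i. c i \<noteq> 0}"

definition wt :: "('i \<Rightarrow> bit) \<Rightarrow> nat" where
  "wt c = card (supp c)"

definition scal :: "bit \<Rightarrow> ('i \<Rightarrow> bit) \<Rightarrow> ('i \<Rightarrow> bit)" where
  "scal a c = (\<lambda>i. a * c i)"

definition lin_code :: "'i set \<Rightarrow> ('i \<Rightarrow> bit) set \<Rightarrow> bool" where
  "lin_code I C \<longleftrightarrow> C \<subseteq> words I \<and> zero_word \<in> C \<and>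
     (\<forall>x\<in>C. \<forall>y\<in>C. (\<lambda>i. x i + y i) \<in> C) \<and> (\<forall>a. \<forall>x\<in>C. scal a x \<in> C)"

text \<open>F_2-linear combinations = sums of finite subsets.\<close>
definition bin_span :: "('i \<Rightarrow> bit) set \<Rightarrow> ('i \<Rightarrow> bit) set" where
  "bin_span B = {(\<lambda>i. \<Sum>b\<in>S. b i) | S. S \<subseteq> B \<and> finite S}"

definition bin_indep :: "('i \<Rightarrow> bit) set \<Rightarrow> bool" where
  "bin_indep B \<longleftrightarrow> (\<forall>S. S \<subseteq> B \<and> finite S \<and> S \<noteq> {} \<longrightarrow> (\<lambda>i. \<Sum>b\<in>S. b i) \<noteq> zero_word)"

definition has_dim :: "('i \<Rightarrow> bit) set \<Rightarrow> nat \<Rightarrow> bool" where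
  "has_dim C k \<longleftrightarrow> (\<exists>B. B \<subseteq> C \<and> finite B \<and> bin_indep B \<and> bin_span B = C \<and> card B = k)"

definition min_dist :: "('i \<Rightarrow> bit) set \<Rightarrow> nat" where
  "min_dist C = Min (wt ` (C - {zero_word}))"

definition is_nkd_code :: "'i set \<Rightarrow> ('i \<Rightarrow> bit) set \<Rightarrow> nat \<Rightarrow> nat \<Rightarrow> nat \<Rightarrow> bool" where
  "is_nkd_code I C n k d \<longleftrightarrow> finite I \<and> card I = n \<and> lin_code I C \<and> has_dim C k \<and>
     C - {zero_word} \<noteq> {} \<and> min_dist C = d"

definition one_weight :: "('i \<Rightarrow> bit) set \<Rightarrow> bool" where
  "one_weight C \<longleftrightarrow> (\<exists>w. \<forall>c\<in>C - {zero_word}. wt c = w)"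

definition minimal_code :: "('i \<Rightarrow> bit) set \<Rightarrow> bool" where
  "minimal_code C \<longleftrightarrow> (\<forall>c\<in>C - {zero_word}. \<forall>c'\<in>C - {zero_word}.
     supp c' \<subseteq> supp c \<longrightarrow> (\<exists>a. c' = scal a c))"

definition griesmer :: "nat \<Rightarrow> nat \<Rightarrow> nat \<Rightarrow> bool" where
  "griesmer n k d \<longleftrightarrow> (\<Sum>i<k. nat \<lceil>real d / 2 ^ i\<rceil>) = n"

definition distance_optimal :: "nat \<Rightarrow> nat \<Rightarrow> nat \<Rightarrow> bool" where
  "distance_optimal n k d \<longleftrightarrow> \<not> (\<exists>C :: (nat \<Rightarrow> bit) set. is_nkd_code {..<n} C n k (d + 1))"

text \<open>Vectors of F_2^m, as functions on [m] = {1..m} (zero elsewhere).\<close>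
definition vecs :: "nat \<Rightarrow> (nat \<Rightarrow> bit) set" where
  "vecs m = {v. \<forall>i. i \<notin> {1..m} \<longrightarrow> v i = 0}"

definition Delta :: "nat \<Rightarrow> nat set \<Rightarrow> (nat \<Rightarrow> bit) set" where
  "Delta m L = {w \<in> vecs m. {i. w i \<noteq> 0} \<subseteq> L}"

definition dotp :: "nat \<Rightarrow> (nat \<Rightarrow> bit) \<Rightarrow> (nat \<Rightarrow> bit) \<Rightarrow> bit" where
  "dotp m u v = (\<Sum>i\<in>{1..m}. u i * v i)"

type_synonym triple = "(nat \<Rightarrow> bit) \<times> (nat \<Rightarrow> bit) \<times> (nat \<Rightarrow> bit)"

definition D2 :: "nat \<Rightarrow> nat set \<Rightarrow> nat set \<Rightarrow> nat set \<Rightarrow> triple set" where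
  "D2 m L M N = {(d1, d3, d2) | d1 d2 d3. d1 \<in> Delta m L \<and> d2 \<in> Delta m M \<and> d3 \<in> Delta m N}"

definition D2star :: "nat \<Rightarrow> nat set \<Rightarrow> nat set \<Rightarrow> nat set \<Rightarrow> triple set" where
  "D2star m L M N = D2 m L M N - {(zero_word, zero_word, zero_word)}"

definition cw :: "nat \<Rightarrow> nat set \<Rightarrow> nat set \<Rightarrow> nat set \<Rightarrow>
    (nat \<Rightarrow> bit) \<Rightarrow> (nat \<Rightarrow> bit) \<Rightarrow> (nat \<Rightarrow> bit) \<Rightarrow> triple \<Rightarrow> bit" where
  "cw m L M N \<alpha> \<beta> \<gamma> = (\<lambda>(x, y, z).
     if (x, y, z) \<in> D2star m L M N then dotp m \<alpha> x + dotp m \<beta> y + dotp m \<gamma> z else 0)"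

definition code :: "nat \<Rightarrow> nat set \<Rightarrow> nat set \<Rightarrow> nat set \<Rightarrow> (triple \<Rightarrow> bit) set" where
  "code m L M N = {cw m L M N \<alpha> \<beta> \<gamma> | \<alpha> \<beta> \<gamma>. \<alpha> \<in> vecs m \<and> \<beta> \<in> vecs m \<and> \<gamma> \<in> vecs m}"

definition Zcount :: "nat \<Rightarrow> nat set \<Rightarrow> nat set \<Rightarrow> nat set \<Rightarrow> nat \<Rightarrow> nat" where
  "Zcount m L M N i = card {(\<alpha>, \<beta>, \<gamma>). \<alpha> \<in> vecs m \<and> \<beta> \<in> vecs m \<and> \<gamma> \<in> vecs m \<and>
     wt (cw m L M N \<alpha> \<beta> \<gamma>) = i}"

end

theory Submission
  imports Defs
begin

text \<open>
  Index the entries of a triple in \<open>D\<^sup>(\<^sup>2\<^sup>)\<close> that may be nonzero by \<open>L \<uplus> N \<uplus> M\<close>. Then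
  \<open>D\<^sup>(\<^sup>2\<^sup>)\<close> is all of \<open>\<bbbF>\<^sub>2\<^sup>s\<close>, and the codeword of \<open>(\<alpha>, \<beta>, \<gamma>)\<close> only depends on the
  restriction \<open>u\<close> of \<open>(\<alpha>, \<beta>, \<gamma>)\<close> to these \<open>s\<close> coordinates: it is the functional
  \<open>t \<mapsto> u \<cdot> t\<close> evaluated on the nonzero vectors, i.e. a word of the binary simplex code of
  dimension \<open>s\<close>. Flipping one coordinate of \<open>t\<close> on which \<open>u\<close> is nonzero flips the value of the
  functional, so a nonzero functional is \<open>1\<close> on exactly half of \<open>\<bbbF>\<^sub>2\<^sup>s\<close> and every nonzero
  codeword has weight \<open>2\<^sup>s\<^sup>-\<^sup>1\<close>. Everything else follows from this: the code is one-weight and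
  hence minimal, \<open>(\<alpha>, \<beta>, \<gamma>)\<close> yields the zero word exactly when it vanishes on \<open>L\<close>, \<open>N\<close>, \<open>M\<close>,
  the Griesmer sum is \<open>2\<^sup>s\<^sup>-\<^sup>1 + \<dots> + 1\<close>, and distance optimality is the Plotkin bound: a fixed
  coordinate is nonzero in at most \<open>2\<^sup>k\<^sup>-\<^sup>1\<close> codewords of a \<open>k\<close>-dimensional code, so
  \<open>(2\<^sup>k - 1) d \<le> n 2\<^sup>k\<^sup>-\<^sup>1\<close>.
\<close>

declare add_bit_eq_xor [simp del] mult_bit_eq_and [simp del]

section \<open>Sums of bits and binary words\<close>

lemma of_bool_eq_1_bit [simp]: "of_bool (b = 1) = (b::bit)"
  by (cases b) simp_all

lemma bit_eq_1_iff_odd: "(b::bit) = 1 \<longleftrightarrow> odd b"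
  by (cases b) simp_all

lemma sum_bit_eq_1_iff:
  fixes f :: "'a \<Rightarrow> bit"
  assumes "finite A"
  shows "(\<Sum>x\<in>A. f x) = 1 \<longleftrightarrow> odd (card {x\<in>A. f x = 1})"
proof -
  have "(\<Sum>x\<in>A. f x) = (\<Sum>x\<in>A. of_bool (f x = 1))"
    by simp
  also have "\<dots> = of_nat (card {x\<in>A. f x = 1})"
    using assms by (simp only: sum_of_bool_eq Collect_conj_eq Collect_mem_eq)
  finally show ?thesis
    by (simp only: bit_eq_1_iff_odd even_of_nat_iff)
qed

lemma sum_bit_mult_eq:
  fixes a b :: "'a \<Rightarrow> bit"
  assumes "finite A"
  shows "(\<Sum>k\<in>A. a k * b k) = (\<Sum>k\<in>{k\<in>A. a k = 1}. b k)"
proof -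
  have "(\<Sum>k\<in>A. a k * b k) = (\<Sum>k\<in>A. of_bool (a k = 1) * b k)"
    by simp
  also have "\<dots> = (\<Sum>k\<in>{k\<in>A. a k = 1}. b k)"
    using assms by (simp only: sum_of_bool_mult_eq Collect_conj_eq Collect_mem_eq)
  finally show ?thesis .
qed

lemma bit_fun_eqI:
  fixes f g :: "'a \<Rightarrow> bit"
  assumes "supp f = supp g"
  shows "f = g"
proof
  fix x
  have "x \<in> supp f \<longleftrightarrow> x \<in> supp g" using assms by simp
  then show "f x = g x" unfolding supp_def by (cases "f x"; cases "g x") simp_all
qed

lemma bij_betw_indicator_words: "bij_betw (\<lambda>S i. of_bool (i \<in> S) :: bit) (Pow I) (words I)"
proof (rule bij_betw_byWitness[where f' = supp])
  show "\<forall>S\<in>Pow I. supp (\<lambda>i. of_bool (i \<in> S) :: bit) = S" by (auto simp: supp_def)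
  show "\<forall>c\<in>words I. (\<lambda>i. of_bool (i \<in> supp c)) = c"
    by (simp add: supp_def)
  show "(\<lambda>S i. of_bool (i \<in> S) :: bit) ` Pow I \<subseteq> words I" by (auto simp: words_def)
  show "supp ` words I \<subseteq> Pow I" by (auto simp: words_def supp_def)
qed

lemma card_words: "finite I \<Longrightarrow> card (words I) = 2 ^ card I"
  using bij_betw_same_card[OF bij_betw_indicator_words, of I] by (simp add: card_Pow)

lemma finite_words: "finite I \<Longrightarrow> finite (words I)"
  using bij_betw_finite[OF bij_betw_indicator_words, of I] by simp

lemma card_half_by_involution:
  assumes "finite A" and "\<And>a. a \<in> A \<Longrightarrow> \<tau> a \<in> A" and "\<And>a. a \<in> A \<Longrightarrow> \<tau> (\<tau> a) = a"
    and "\<And>a. a \<in> A \<Longrightarrow> P (\<tau> a) \<longleftrightarrow> \<not> P a"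
  shows "2 * card {a\<in>A. P a} = card A"
proof -
  have "bij_betw \<tau> {a\<in>A. P a} {a\<in>A. \<not> P a}"
    by (rule bij_betw_byWitness[where f' = \<tau>]) (use assms in auto)
  then have "card {a\<in>A. \<not> P a} = card {a\<in>A. P a}" by (simp add: bij_betw_same_card)
  moreover have "card A = card {a\<in>A. P a} + card {a\<in>A. \<not> P a}"
    using assms(1) by (subst card_Un_disjoint[symmetric]) (auto intro: arg_cong[where f = card])
  ultimately show ?thesis by simp
qed

lemma card_subsets_odd_intersection:
  assumes "finite I" and "K \<subseteq> I" and "K \<noteq> {}"
  shows "2 * card {S\<in>Pow I. odd (card (S \<inter> K))} = 2 ^ card I"
proof -
  obtain k where k: "k \<in> K" using assms(3) by blast
  define \<tau> where "\<tau> S = (if k \<in> S then S - {k} else insert k S)" for S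
  have "odd (card (\<tau> S \<inter> K)) \<longleftrightarrow> \<not> odd (card (S \<inter> K))" if "S \<subseteq> I" for S
  proof -
    have fin: "finite (S \<inter> K)" using assms(1) that by (meson finite_Int finite_subset)
    show ?thesis
    proof (cases "k \<in> S")
      case True
      then have "\<tau> S \<inter> K = (S \<inter> K) - {k}" by (auto simp: \<tau>_def)
      then have "card (S \<inter> K) = Suc (card (\<tau> S \<inter> K))"
        using fin k True card_Suc_Diff1[of "S \<inter> K" k] by simp
      then show ?thesis by simp
    next
      case False
      then have "card (\<tau> S \<inter> K) = Suc (card (S \<inter> K))"
        using fin k by (simp add: \<tau>_def)
      then show ?thesis by simp
    qed
  qed
  then have "2 * card {S\<in>Pow I. odd (card (S \<inter> K))} = card (Pow I)"
    by (intro card_half_by_involution[where \<tau> = \<tau>]) (use assms k in \<open>auto simp: \<tau>_def\<close>)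
  then show ?thesis using assms(1) by (simp add: card_Pow)
qed

section \<open>Binary linear codes\<close>

lemma wt_zero_word: "wt zero_word = 0"
  by (simp add: wt_def supp_def zero_word_def)

lemma lin_codeI:
  assumes "C \<subseteq> words I" and "zero_word \<in> C" and "\<And>x y. x \<in> C \<Longrightarrow> y \<in> C \<Longrightarrow> (\<lambda>i. x i + y i) \<in> C"
  shows "lin_code I C"
proof -
  have "scal a x \<in> C" if "x \<in> C" for a x
    using that assms(2) by (cases a) (simp_all add: scal_def zero_word_def)
  then show ?thesis unfolding lin_code_def using assms by blast
qed

lemma bin_span_image:
  fixes g :: "'a \<Rightarrow> 'i \<Rightarrow> bit"
  assumes "finite J" and "inj_on g J"
  shows "bin_span (g ` J) = (\<lambda>K i. \<Sum>k\<in>K. g k i) ` Pow J"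
proof
  have sums: "(\<lambda>i. \<Sum>b\<in>g ` K. b i) = (\<lambda>i. \<Sum>k\<in>K. g k i)" if "K \<subseteq> J" for K
    using inj_on_subset[OF assms(2) that] by (simp add: sum.reindex)
  show "bin_span (g ` J) \<subseteq> (\<lambda>K i. \<Sum>k\<in>K. g k i) ` Pow J"
  proof
    fix c assume "c \<in> bin_span (g ` J)"
    then obtain S where S: "S \<subseteq> g ` J" "c = (\<lambda>i. \<Sum>b\<in>S. b i)" unfolding bin_span_def by blast
    then obtain K where "K \<subseteq> J" "S = g ` K" by (auto simp: subset_image_iff)
    then show "c \<in> (\<lambda>K i. \<Sum>k\<in>K. g k i) ` Pow J" using sums S(2) by blast
  qed
  show "(\<lambda>K i. \<Sum>k\<in>K. g k i) ` Pow J \<subseteq> bin_span (g ` J)"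
  proof
    fix c assume "c \<in> (\<lambda>K i. \<Sum>k\<in>K. g k i) ` Pow J"
    then obtain K where K: "K \<subseteq> J" "c = (\<lambda>i. \<Sum>k\<in>K. g k i)" by blast
    then have "finite (g ` K)" using assms(1) finite_subset by blast
    moreover have "g ` K \<subseteq> g ` J" using K(1) by blast
    moreover have "c = (\<lambda>i. \<Sum>b\<in>g ` K. b i)" using sums K by simp
    ultimately show "c \<in> bin_span (g ` J)" unfolding bin_span_def by blast
  qed
qed

lemma has_dim_subset_sums:
  fixes g :: "'a \<Rightarrow> 'i \<Rightarrow> bit"
  assumes "finite J" and inj: "inj_on (\<lambda>K i. \<Sum>k\<in>K. g k i) (Pow J)"
  shows "has_dim ((\<lambda>K i. \<Sum>k\<in>K. g k i) ` Pow J) (card J)"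
proof -
  let ?v = "\<lambda>K i. \<Sum>k\<in>K. g k i"
  have inj_g: "inj_on g J"
  proof (rule inj_onI)
    fix k k' assume "k \<in> J" "k' \<in> J" "g k = g k'"
    then have "{k} = {k'}" using inj_onD[OF inj, of "{k}" "{k'}"] by simp
    then show "k = k'" by simp
  qed
  have indep: "bin_indep (g ` J)"
    unfolding bin_indep_def
  proof (intro allI impI)
    fix S assume "S \<subseteq> g ` J \<and> finite S \<and> S \<noteq> {}"
    then obtain K where K: "K \<subseteq> J" "S = g ` K" "K \<noteq> {}" by (auto simp: subset_image_iff)
    have "?v K \<noteq> ?v {}"
    proof
      assume "?v K = ?v {}"
      then show False using inj_onD[OF inj, of K "{}"] K by blast
    qed
    moreover have "(\<lambda>i. \<Sum>b\<in>S. b i) = ?v K"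
      using inj_on_subset[OF inj_g K(1)] K(2) by (simp add: sum.reindex)
    ultimately show "(\<lambda>i. \<Sum>b\<in>S. b i) \<noteq> zero_word" by (simp add: zero_word_def)
  qed
  have "g ` J \<subseteq> ?v ` Pow J"
  proof
    fix c assume "c \<in> g ` J"
    then obtain k where "k \<in> J" "c = g k" by blast
    then show "c \<in> ?v ` Pow J" by (intro image_eqI[where x = "{k}"]) simp_all
  qed
  moreover have "card (g ` J) = card J" using inj_g by (rule card_image)
  ultimately show ?thesis
    unfolding has_dim_def using assms(1) bin_span_image[OF assms(1) inj_g] indep by blast
qed

lemma min_dist_constant_weight:
  assumes "C - {zero_word} \<noteq> {}" and "\<And>c. c \<in> C - {zero_word} \<Longrightarrow> wt c = w"
  shows "min_dist C = w"
proof -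
  have "wt ` (C - {zero_word}) = {w}" using assms by blast
  then show ?thesis by (simp add: min_dist_def)
qed

lemma one_weight_imp_minimal_code:
  assumes "finite I" and "C \<subseteq> words I" and "one_weight C"
  shows "minimal_code C"
  unfolding minimal_code_def
proof (intro ballI impI)
  fix c c' assume c: "c \<in> C - {zero_word}" and c': "c' \<in> C - {zero_word}" and sub: "supp c' \<subseteq> supp c"
  have "supp c \<subseteq> I" using c assms(2) unfolding words_def supp_def by blast
  then have "finite (supp c)" using assms(1) by (rule finite_subset)
  moreover have "card (supp c') = card (supp c)"
    using assms(3) c c' unfolding one_weight_def wt_def by metis
  ultimately have "supp c' = supp c" using sub by (simp add: card_subset_eq)
  then have "c' = scal 1 c" unfolding scal_def by (simp add: bit_fun_eqI)
  then show "\<exists>a. c' = scal a c" ..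
qed

lemma griesmer_simplex: "griesmer (2 ^ k - 1) k (2 ^ (k - 1))"
proof -
  have "nat \<lceil>real (2 ^ (k - 1)) / 2 ^ i\<rceil> = 2 ^ (k - Suc i)" if "i < k" for i
  proof -
    have "(2::real) ^ (k - 1) = 2 ^ (k - Suc i) * 2 ^ i"
      using that by (simp flip: power_add)
    then have "real (2 ^ (k - 1)) / 2 ^ i = real (2 ^ (k - Suc i))" by simp
    then show ?thesis by (metis ceiling_of_nat nat_int)
  qed
  then have "(\<Sum>i<k. nat \<lceil>real (2 ^ (k - 1)) / 2 ^ i\<rceil>) = (\<Sum>i<k. 2 ^ (k - Suc i))"
    by (intro sum.cong) simp_all
  also have "\<dots> = (\<Sum>i<k. 2 ^ i)" by (rule sum.nat_diff_reindex)
  also have "\<dots> = 2 ^ k - 1" using sum_power2 by (simp add: atLeast0LessThan)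
  finally show ?thesis unfolding griesmer_def .
qed

lemma card_odd_column_sums_le:
  fixes B :: "('i \<Rightarrow> bit) set"
  assumes "finite B"
  shows "card {S\<in>Pow B. (\<Sum>b\<in>S. b i) = 1} \<le> 2 ^ (card B - 1)"
proof -
  define K where "K = {b\<in>B. b i = 1}"
  have "(\<Sum>b\<in>S. b i) = 1 \<longleftrightarrow> odd (card (S \<inter> K))" if "S \<subseteq> B" for S
  proof -
    have "finite S" using assms that by (rule finite_subset[rotated])
    moreover have "{b\<in>S. b i = 1} = S \<inter> K" using that by (auto simp: K_def)
    ultimately show ?thesis using sum_bit_eq_1_iff[of S "\<lambda>b. b i"] by simp
  qed
  then have eq: "{S\<in>Pow B. (\<Sum>b\<in>S. b i) = 1} = {S\<in>Pow B. odd (card (S \<inter> K))}" by auto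
  show ?thesis
  proof (cases "K = {}")
    case True
    then show ?thesis unfolding eq by simp
  next
    case False
    then have "2 * card {S\<in>Pow B. odd (card (S \<inter> K))} = 2 ^ card B"
      using assms by (intro card_subsets_odd_intersection) (auto simp: K_def)
    moreover have "card B \<noteq> 0" using False assms by (auto simp: K_def)
    ultimately show ?thesis unfolding eq by (cases "card B") simp_all
  qed
qed

lemma plotkin_bound:
  fixes C :: "('i \<Rightarrow> bit) set"
  assumes "finite I" and "C \<subseteq> words I" and "has_dim C k"
    and "\<And>c. c \<in> C \<Longrightarrow> c \<noteq> zero_word \<Longrightarrow> d \<le> wt c"
  shows "(2 ^ k - 1) * d \<le> card I * 2 ^ (k - 1)"
proof -
  obtain B where B: "finite B" "bin_indep B" "bin_span B = C" "card B = k"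
    using assms(3) unfolding has_dim_def by blast
  define v where "v S = (\<lambda>i. \<Sum>b\<in>S. b i)" for S :: "('i \<Rightarrow> bit) set"
  have v_in_C: "v S \<in> C" if "S \<subseteq> B" for S
    using B(1,3) that unfolding bin_span_def v_def by (auto intro: finite_subset)
  have wt_ge: "d \<le> wt (v S)" if "S \<in> Pow B - {{}}" for S
  proof -
    have "v S \<noteq> zero_word"
      using B(1,2) that unfolding bin_indep_def v_def by (auto intro: finite_subset)
    then show ?thesis using assms(4) v_in_C that by blast
  qed
  have wt_eq: "wt (v S) = (\<Sum>i\<in>I. of_bool (v S i = 1))" if "S \<subseteq> B" for S
  proof -
    have "\<forall>i. i \<notin> I \<longrightarrow> v S i = 0"
      using v_in_C[OF that] assms(2) unfolding words_def by blast
    then have "supp (v S) = I \<inter> {i. v S i = 1}" unfolding supp_def by auto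
    then show ?thesis using assms(1) by (simp add: wt_def)
  qed
  have "(2 ^ k - 1) * d = (\<Sum>S\<in>Pow B - {{}}. d)"
    using B(1,4) by (simp add: card_Pow)
  also have "\<dots> \<le> (\<Sum>S\<in>Pow B - {{}}. wt (v S))"
    by (rule sum_mono) (rule wt_ge)
  also have "\<dots> \<le> (\<Sum>S\<in>Pow B. wt (v S))"
    using B(1) by (intro sum_mono2) auto
  also have "\<dots> = (\<Sum>S\<in>Pow B. \<Sum>i\<in>I. of_bool (v S i = 1))"
    using wt_eq by simp
  also have "\<dots> = (\<Sum>i\<in>I. \<Sum>S\<in>Pow B. of_bool (v S i = 1))"
    by (rule sum.swap)
  also have "\<dots> = (\<Sum>i\<in>I. card {S\<in>Pow B. v S i = 1})"
    using B(1) by (simp add: Collect_conj_eq Int_commute Pow_def)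
  also have "\<dots> \<le> (\<Sum>i\<in>I. 2 ^ (k - 1))"
    using card_odd_column_sums_le[OF B(1)] B(4) unfolding v_def by (intro sum_mono) simp
  finally show ?thesis by simp
qed

lemma distance_optimal_simplex:
  assumes "1 \<le> k"
  shows "distance_optimal (2 ^ k - 1) k (2 ^ (k - 1))"
  unfolding distance_optimal_def
proof
  let ?n = "2 ^ k - 1 :: nat" and ?d = "2 ^ (k - 1) :: nat"
  assume "\<exists>C :: (nat \<Rightarrow> bit) set. is_nkd_code {..<?n} C ?n k (?d + 1)"
  then obtain C :: "(nat \<Rightarrow> bit) set" where
    words: "C \<subseteq> words {..<?n}" and dim: "has_dim C k" and md: "min_dist C = ?d + 1"
    unfolding is_nkd_code_def lin_code_def by blast
  have "finite C" using words finite_words finite_subset by blast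
  then have wt_ge: "?d + 1 \<le> wt c" if "c \<in> C" "c \<noteq> zero_word" for c
    using that md unfolding min_dist_def by (metis Diff_iff Min_le finite_Diff finite_imageI image_eqI singletonD)
  have "?n * (?d + 1) \<le> card {..<?n} * ?d"
    using plotkin_bound[OF finite_lessThan words dim wt_ge] .
  moreover have "1 \<le> ?n" using power_increasing[OF assms, of "2::nat"] by simp
  ultimately show False by (simp add: distrib_left)
qed

section \<open>The subfield code of \<open>D\<^sup>(\<^sup>2\<^sup>)\<close>\<close>

lemma vecs_add: "u \<in> vecs m \<Longrightarrow> v \<in> vecs m \<Longrightarrow> (\<lambda>i. u i + v i) \<in> vecs m"
  unfolding vecs_def by simp

lemma vanishing_vecs_eq_words: "{v \<in> vecs m. \<forall>j\<in>A. v j = 0} = words ({1..m} - A)"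
  unfolding vecs_def words_def by auto

lemma card_vanishing_vecs: "A \<subseteq> {1..m} \<Longrightarrow> card {v \<in> vecs m. \<forall>j\<in>A. v j = 0} = 2 ^ (m - card A)"
  unfolding vanishing_vecs_eq_words by (simp add: card_words card_Diff_subset finite_subset)

lemma card_vecs: "card (vecs m) = 2 ^ m"
  using card_vanishing_vecs[of "{}" m] by simp

lemma finite_vecs: "finite (vecs m)"
  using card_vecs by (metis card.infinite power_not_zero zero_neq_numeral)

lemma indicator_in_Delta: "{j. P j} \<subseteq> A \<Longrightarrow> A \<subseteq> {1..m} \<Longrightarrow> (\<lambda>j. of_bool (P j)) \<in> Delta m A"
  unfolding Delta_def vecs_def by auto

lemma dotp_Delta:
  assumes "x \<in> Delta m A" and "A \<subseteq> {1..m}"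
  shows "dotp m \<alpha> x = (\<Sum>j\<in>A. \<alpha> j * x j)"
  unfolding dotp_def using assms by (intro sum.mono_neutral_right) (auto simp: Delta_def)

lemma dotp_add_left: "dotp m (\<lambda>i. u i + v i) x = dotp m u x + dotp m v x"
  unfolding dotp_def by (simp add: distrib_right sum.distrib)

lemma cw_add:
  "(\<lambda>t. cw m L M N \<alpha> \<beta> \<gamma> t + cw m L M N \<alpha>' \<beta>' \<gamma>' t) =
    cw m L M N (\<lambda>i. \<alpha> i + \<alpha>' i) (\<lambda>i. \<beta> i + \<beta>' i) (\<lambda>i. \<gamma> i + \<gamma>' i)"
  unfolding cw_def dotp_add_left by (auto simp: ac_simps fun_eq_iff)

lemma D2_eq_product: "D2 m L M N = Delta m L \<times> Delta m N \<times> Delta m M"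
  unfolding D2_def by auto

lemma ball_Plus: "(\<forall>x\<in>A <+> B. P x) \<longleftrightarrow> (\<forall>a\<in>A. P (Inl a)) \<and> (\<forall>b\<in>B. P (Inr b))"
  by blast

(* The entries of a triple (x, y, z) in D2 m L M N that may be nonzero are indexed by
   L <+> N <+> M: Inl j, Inr (Inl j) and Inr (Inr j) select x j, y j and z j. *)
definition triple_coord :: "nat + nat + nat \<Rightarrow> triple \<Rightarrow> bit" where
  "triple_coord k t = (case t of (x, y, z) \<Rightarrow> case_sum x (case_sum y z) k)"

definition triple_of_set :: "(nat + nat + nat) set \<Rightarrow> triple" where
  "triple_of_set S =
     (\<lambda>j. of_bool (Inl j \<in> S), \<lambda>j. of_bool (Inr (Inl j) \<in> S), \<lambda>j. of_bool (Inr (Inr j) \<in> S))"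

lemma triple_coord_triple_of_set [simp]: "triple_coord k (triple_of_set S) = of_bool (k \<in> S)"
  by (simp add: triple_coord_def triple_of_set_def split: sum.split)

lemma inj_triple_of_set: "inj triple_of_set"
proof (rule injI)
  fix S S' assume "triple_of_set S = triple_of_set S'"
  then have "(of_bool (k \<in> S) :: bit) = of_bool (k \<in> S')" for k by (metis triple_coord_triple_of_set)
  then show "S = S'" by (simp add: of_bool_eq_iff set_eq_iff)
qed

lemma triple_of_set_empty: "triple_of_set {} = (zero_word, zero_word, zero_word)"
  by (simp add: triple_of_set_def zero_word_def)

locale subfield_code =
  fixes m :: nat and L M N :: "nat set"
  assumes L_sub: "L \<subseteq> {1..m}" and M_sub: "M \<subseteq> {1..m}" and N_sub: "N \<subseteq> {1..m}"
begin

definition coords :: "(nat + nat + nat) set" where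
  "coords = L <+> N <+> M"

lemma finite_coords: "finite coords"
  unfolding coords_def using L_sub M_sub N_sub by (auto intro: finite_subset)

lemma card_coords: "card coords = card L + card M + card N"
proof -
  have "finite L" "finite M" "finite N"
    using L_sub M_sub N_sub by (auto intro: finite_subset)
  then show ?thesis unfolding coords_def by (simp add: card_Plus)
qed

lemma triple_of_set_in_D2: "S \<subseteq> coords \<Longrightarrow> triple_of_set S \<in> D2 m L M N"
  unfolding D2_eq_product triple_of_set_def coords_def
  using L_sub M_sub N_sub by (auto intro!: indicator_in_Delta)

lemma triple_of_set_coords:
  assumes "t \<in> D2 m L M N"
  shows "triple_of_set {k \<in> coords. triple_coord k t = 1} = t"
proof -
  obtain x y z where t: "t = (x, y, z)"
    and "{j. x j \<noteq> 0} \<subseteq> L" "{j. y j \<noteq> 0} \<subseteq> N" "{j. z j \<noteq> 0} \<subseteq> M"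
    using assms unfolding D2_eq_product Delta_def by blast
  then have "Inl j \<in> {k \<in> coords. triple_coord k t = 1} \<longleftrightarrow> x j = 1"
    and "Inr (Inl j) \<in> {k \<in> coords. triple_coord k t = 1} \<longleftrightarrow> y j = 1"
    and "Inr (Inr j) \<in> {k \<in> coords. triple_coord k t = 1} \<longleftrightarrow> z j = 1" for j
    unfolding coords_def triple_coord_def by auto
  then show ?thesis unfolding triple_of_set_def t by simp
qed

lemma D2_eq_image: "D2 m L M N = triple_of_set ` Pow coords"
proof
  show "D2 m L M N \<subseteq> triple_of_set ` Pow coords"
  proof
    fix t assume "t \<in> D2 m L M N"
    then show "t \<in> triple_of_set ` Pow coords"
      by (intro image_eqI[where x = "{k \<in> coords. triple_coord k t = 1}"]) (simp_all add: triple_of_set_coords)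
  qed
  show "triple_of_set ` Pow coords \<subseteq> D2 m L M N"
    using triple_of_set_in_D2 by blast
qed

lemma zero_triple_in_D2: "(zero_word, zero_word, zero_word) \<in> D2 m L M N"
  using triple_of_set_in_D2[of "{}"] by (simp add: triple_of_set_empty)

lemma card_D2star: "card (D2star m L M N) = 2 ^ card coords - 1"
proof -
  have "card (D2 m L M N) = 2 ^ card coords"
    unfolding D2_eq_image using inj_triple_of_set finite_coords
    by (simp add: card_image inj_on_subset card_Pow)
  then show ?thesis unfolding D2star_def using zero_triple_in_D2 by simp
qed

lemma finite_D2star: "finite (D2star m L M N)"
  unfolding D2star_def D2_eq_image using finite_coords by simp

definition codeword :: "(nat + nat + nat) set \<Rightarrow> triple \<Rightarrow> bit" where
  "codeword K t = (if t \<in> D2star m L M N then \<Sum>k\<in>K. triple_coord k t else 0)"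

lemma codeword_empty: "codeword {} = zero_word"
  by (simp add: codeword_def zero_word_def fun_eq_iff)

lemma cw_eq_codeword: "cw m L M N \<alpha> \<beta> \<gamma> = codeword {k \<in> coords. triple_coord k (\<alpha>, \<beta>, \<gamma>) = 1}"
proof
  fix t :: triple
  obtain x y z where t: "t = (x, y, z)" by (cases t)
  show "cw m L M N \<alpha> \<beta> \<gamma> t = codeword {k \<in> coords. triple_coord k (\<alpha>, \<beta>, \<gamma>) = 1} t"
  proof (cases "t \<in> D2star m L M N")
    case True
    then have "x \<in> Delta m L" "y \<in> Delta m N" "z \<in> Delta m M"
      unfolding D2star_def D2_eq_product t by auto
    then have "dotp m \<alpha> x + dotp m \<beta> y + dotp m \<gamma> z
        = (\<Sum>j\<in>L. \<alpha> j * x j) + (\<Sum>j\<in>N. \<beta> j * y j) + (\<Sum>j\<in>M. \<gamma> j * z j)"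
      using L_sub M_sub N_sub by (simp add: dotp_Delta)
    also have "\<dots> = (\<Sum>k\<in>coords. triple_coord k (\<alpha>, \<beta>, \<gamma>) * triple_coord k t)"
      using finite_coords unfolding coords_def t by (simp add: sum.Plus triple_coord_def add.assoc)
    also have "\<dots> = (\<Sum>k\<in>{k \<in> coords. triple_coord k (\<alpha>, \<beta>, \<gamma>) = 1}. triple_coord k t)"
      using finite_coords by (rule sum_bit_mult_eq)
    finally show ?thesis using True unfolding cw_def codeword_def t by simp
  next
    case False
    then show ?thesis unfolding cw_def codeword_def t by simp
  qed
qed

lemma code_eq_image: "code m L M N = codeword ` Pow coords"
proof
  show "code m L M N \<subseteq> codeword ` Pow coords"
    unfolding code_def using cw_eq_codeword by blast
  show "codeword ` Pow coords \<subseteq> code m L M N"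
  proof
    fix c assume "c \<in> codeword ` Pow coords"
    then obtain K where K: "K \<subseteq> coords" "c = codeword K" by blast
    obtain \<alpha> \<beta> \<gamma> where abc: "triple_of_set K = (\<alpha>, \<beta>, \<gamma>)" by (cases "triple_of_set K")
    have "(\<alpha>, \<beta>, \<gamma>) \<in> Delta m L \<times> Delta m N \<times> Delta m M"
      using triple_of_set_in_D2[OF K(1)] unfolding abc D2_eq_product .
    then have vecs: "\<alpha> \<in> vecs m" "\<beta> \<in> vecs m" "\<gamma> \<in> vecs m"
      unfolding Delta_def by blast+
    have "triple_coord k (\<alpha>, \<beta>, \<gamma>) = of_bool (k \<in> K)" for k
      unfolding abc[symmetric] by (rule triple_coord_triple_of_set)
    then have "{k \<in> coords. triple_coord k (\<alpha>, \<beta>, \<gamma>) = 1} = K"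
      using K(1) by auto
    then have "c = cw m L M N \<alpha> \<beta> \<gamma>"
      using K(2) cw_eq_codeword by simp
    then show "c \<in> code m L M N"
      unfolding code_def using vecs by blast
  qed
qed

lemma codeword_at_singleton:
  assumes "k \<in> coords" and "finite K"
  shows "codeword K (triple_of_set {k}) = of_bool (k \<in> K)"
proof -
  have "triple_of_set {k} \<noteq> (zero_word, zero_word, zero_word)"
    using inj_triple_of_set by (metis injD insert_not_empty triple_of_set_empty)
  then have "triple_of_set {k} \<in> D2star m L M N"
    using triple_of_set_in_D2[of "{k}"] assms(1) unfolding D2star_def by simp
  then show ?thesis using assms(2) by (simp add: codeword_def of_bool_def sum.delta del: sum_of_bool_eq)
qed

lemma inj_on_codeword: "inj_on codeword (Pow coords)"
proof (rule inj_onI)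
  fix K K' assume K: "K \<in> Pow coords" and K': "K' \<in> Pow coords" and eq: "codeword K = codeword K'"
  have "k \<in> K \<longleftrightarrow> k \<in> K'" for k
  proof (cases "k \<in> coords")
    case True
    have "finite K" "finite K'" using K K' finite_coords by (auto intro: finite_subset)
    then show ?thesis using codeword_at_singleton[OF True] eq by (metis of_bool_eq_iff)
  next
    case False
    then show ?thesis using K K' by blast
  qed
  then show "K = K'" by blast
qed

lemma codeword_eq_sum: "finite K \<Longrightarrow> codeword K = (\<lambda>t. \<Sum>k\<in>K. codeword {k} t)"
  by (simp add: codeword_def fun_eq_iff)

lemma has_dim_code: "has_dim (code m L M N) (card coords)"
proof -
  let ?sum = "\<lambda>K t. \<Sum>k\<in>K. codeword {k} t"
  have eq: "codeword K = ?sum K" if "K \<in> Pow coords" for K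
    using that by (intro codeword_eq_sum rev_finite_subset[OF finite_coords]) simp
  have "inj_on codeword (Pow coords) \<longleftrightarrow> inj_on ?sum (Pow coords)"
    using eq by (rule inj_on_cong)
  then have "has_dim (?sum ` Pow coords) (card coords)"
    using inj_on_codeword has_dim_subset_sums[OF finite_coords] by simp
  moreover have "code m L M N = ?sum ` Pow coords"
    unfolding code_eq_image using eq by (rule image_cong[OF refl])
  ultimately show ?thesis by simp
qed

lemma wt_codeword:
  assumes "K \<subseteq> coords" and "K \<noteq> {}"
  shows "wt (codeword K) = 2 ^ (card coords - 1)"
proof -
  have "finite K" using assms(1) by (rule rev_finite_subset[OF finite_coords])
  then have odd_iff: "(\<Sum>k\<in>K. triple_coord k (triple_of_set S)) = 1 \<longleftrightarrow> odd (card (S \<inter> K))" for S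
    using sum_bit_eq_1_iff[of K "\<lambda>k. triple_coord k (triple_of_set S)"] by (simp add: Int_commute Collect_conj_eq)
  have "supp (codeword K) = {t \<in> D2 m L M N. (\<Sum>k\<in>K. triple_coord k t) = 1}"
    unfolding supp_def codeword_def D2star_def
    by (auto simp flip: triple_of_set_empty)
  also have "\<dots> = triple_of_set ` {S \<in> Pow coords. odd (card (S \<inter> K))}"
    unfolding D2_eq_image using odd_iff by auto
  finally have "wt (codeword K) = card {S \<in> Pow coords. odd (card (S \<inter> K))}"
    unfolding wt_def using inj_triple_of_set by (simp add: card_image inj_on_subset)
  moreover have "2 * card {S \<in> Pow coords. odd (card (S \<inter> K))} = 2 ^ card coords"
    using card_subsets_odd_intersection[OF finite_coords assms] .
  moreover have "card coords \<noteq> 0"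
    using assms finite_coords by auto
  ultimately show ?thesis by (cases "card coords") simp_all
qed

lemma wt_code: "c \<in> code m L M N \<Longrightarrow> c \<noteq> zero_word \<Longrightarrow> wt c = 2 ^ (card coords - 1)"
  unfolding code_eq_image using wt_codeword codeword_empty by blast

lemma wt_cw:
  "wt (cw m L M N \<alpha> \<beta> \<gamma>) =
    (if (\<forall>j\<in>L. \<alpha> j = 0) \<and> (\<forall>j\<in>N. \<beta> j = 0) \<and> (\<forall>j\<in>M. \<gamma> j = 0) then 0
     else 2 ^ (card coords - 1))"
proof -
  define K where "K = {k \<in> coords. triple_coord k (\<alpha>, \<beta>, \<gamma>) = 1}"
  have "K = {} \<longleftrightarrow> (\<forall>k\<in>coords. triple_coord k (\<alpha>, \<beta>, \<gamma>) = 0)"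
    unfolding K_def by auto
  also have "\<dots> \<longleftrightarrow> (\<forall>j\<in>L. \<alpha> j = 0) \<and> (\<forall>j\<in>N. \<beta> j = 0) \<and> (\<forall>j\<in>M. \<gamma> j = 0)"
    unfolding coords_def by (simp add: ball_Plus triple_coord_def)
  finally have K_empty_iff: "K = {} \<longleftrightarrow> \<dots>" .
  show ?thesis
  proof (cases "K = {}")
    case True
    then have "wt (cw m L M N \<alpha> \<beta> \<gamma>) = 0"
      unfolding cw_eq_codeword K_def[symmetric] by (simp add: codeword_empty wt_def supp_def zero_word_def)
    then show ?thesis using True K_empty_iff by simp
  next
    case False
    then have "wt (cw m L M N \<alpha> \<beta> \<gamma>) = 2 ^ (card coords - 1)"
      unfolding cw_eq_codeword K_def[symmetric] by (intro wt_codeword) (auto simp: K_def)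
    then show ?thesis using False K_empty_iff by simp
  qed
qed

lemma zero_word_in_code: "zero_word \<in> code m L M N"
  unfolding code_eq_image using codeword_empty by (metis Pow_bottom image_eqI)

lemma code_subset_words: "code m L M N \<subseteq> words (D2star m L M N)"
  unfolding code_eq_image words_def codeword_def by auto

lemma lin_code_code: "lin_code (D2star m L M N) (code m L M N)"
proof (rule lin_codeI[OF code_subset_words zero_word_in_code])
  fix x y assume "x \<in> code m L M N" "y \<in> code m L M N"
  then obtain \<alpha> \<beta> \<gamma> \<alpha>' \<beta>' \<gamma>' where
    "x = cw m L M N \<alpha> \<beta> \<gamma>" "\<alpha> \<in> vecs m" "\<beta> \<in> vecs m" "\<gamma> \<in> vecs m"
    "y = cw m L M N \<alpha>' \<beta>' \<gamma>'" "\<alpha>' \<in> vecs m" "\<beta>' \<in> vecs m" "\<gamma>' \<in> vecs m"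
    unfolding code_def by blast
  moreover from this have
    "(\<lambda>t. x t + y t) = cw m L M N (\<lambda>i. \<alpha> i + \<alpha>' i) (\<lambda>i. \<beta> i + \<beta>' i) (\<lambda>i. \<gamma> i + \<gamma>' i)"
    by (simp add: cw_add)
  ultimately show "(\<lambda>t. x t + y t) \<in> code m L M N"
    unfolding code_def by (blast intro: vecs_add)
qed

lemma card_code: "card (code m L M N) = 2 ^ card coords"
  unfolding code_eq_image using inj_on_codeword finite_coords by (simp add: card_image card_Pow)

lemma code_has_nonzero_word:
  assumes "coords \<noteq> {}"
  shows "code m L M N - {zero_word} \<noteq> {}"
proof -
  obtain k where "k \<in> coords" using assms by blast
  then have "codeword {k} \<in> code m L M N" and "wt (codeword {k}) \<noteq> 0"
    using wt_codeword[of "{k}"] unfolding code_eq_image by auto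
  moreover from this have "codeword {k} \<noteq> zero_word" using wt_zero_word by metis
  ultimately show ?thesis by blast
qed

lemma one_weight_code: "one_weight (code m L M N)"
  unfolding one_weight_def using wt_code by blast

lemma code_is_nkd:
  assumes "coords \<noteq> {}"
  shows "is_nkd_code (D2star m L M N) (code m L M N)
    (2 ^ card coords - 1) (card coords) (2 ^ (card coords - 1))"
  unfolding is_nkd_code_def
  using finite_D2star card_D2star lin_code_code has_dim_code code_has_nonzero_word[OF assms]
    min_dist_constant_weight[OF code_has_nonzero_word[OF assms]] wt_code
  by blast

lemma card_code_weight_zero: "card {c \<in> code m L M N. wt c = 0} = 1"
proof -
  have "{c \<in> code m L M N. wt c = 0} = {zero_word}"
    using wt_code zero_word_in_code wt_zero_word by fastforce
  then show ?thesis by simp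
qed

lemma card_code_weight_nonzero:
  "card {c \<in> code m L M N. wt c = 2 ^ (card coords - 1)} = 2 ^ card coords - 1"
proof -
  have "wt (zero_word :: triple \<Rightarrow> bit) \<noteq> 2 ^ (card coords - 1)" by (simp add: wt_zero_word)
  then have "{c \<in> code m L M N. wt c = 2 ^ (card coords - 1)} = code m L M N - {zero_word}"
    using wt_code by auto
  then show ?thesis using card_code zero_word_in_code by simp
qed

lemma minimal_code_code: "minimal_code (code m L M N)"
  using one_weight_imp_minimal_code[OF finite_D2star code_subset_words one_weight_code] .

lemma card_supports_le: "card L \<le> m" "card M \<le> m" "card N \<le> m"
  using card_mono[OF finite_atLeastAtMost L_sub] card_mono[OF finite_atLeastAtMost M_sub]
    card_mono[OF finite_atLeastAtMost N_sub]
  by simp_all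

definition code_kernel :: "triple set" where
  "code_kernel = {v \<in> vecs m. \<forall>j\<in>L. v j = 0} \<times> {v \<in> vecs m. \<forall>j\<in>N. v j = 0} \<times>
     {v \<in> vecs m. \<forall>j\<in>M. v j = 0}"

lemma card_code_kernel: "card code_kernel = 2 ^ (3 * m - card coords)"
proof -
  have "card code_kernel = 2 ^ (m - card L) * 2 ^ (m - card N) * 2 ^ (m - card M)"
    unfolding code_kernel_def using L_sub M_sub N_sub
    by (simp add: card_cartesian_product card_vanishing_vecs)
  also have "\<dots> = 2 ^ (3 * m - card coords)"
    using card_supports_le by (simp add: card_coords flip: power_add)
  finally show ?thesis .
qed

lemma Zcount_zero: "Zcount m L M N 0 = 2 ^ (3 * m - card coords)"
proof -
  have "{(\<alpha>, \<beta>, \<gamma>). \<alpha> \<in> vecs m \<and> \<beta> \<in> vecs m \<and> \<gamma> \<in> vecs m \<and> wt (cw m L M N \<alpha> \<beta> \<gamma>) = 0}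
      = code_kernel"
    unfolding code_kernel_def by (auto simp: wt_cw)
  then show ?thesis unfolding Zcount_def using card_code_kernel by simp
qed

lemma Zcount_nonzero:
  "Zcount m L M N (2 ^ (card coords - 1)) = 2 ^ (3 * m - card coords) * (2 ^ card coords - 1)"
proof -
  have "{(\<alpha>, \<beta>, \<gamma>). \<alpha> \<in> vecs m \<and> \<beta> \<in> vecs m \<and> \<gamma> \<in> vecs m \<and>
        wt (cw m L M N \<alpha> \<beta> \<gamma>) = 2 ^ (card coords - 1)} = vecs m \<times> vecs m \<times> vecs m - code_kernel"
    unfolding code_kernel_def by (auto simp: wt_cw)
  moreover have "code_kernel \<subseteq> vecs m \<times> vecs m \<times> vecs m"
    unfolding code_kernel_def by blast
  ultimately have "Zcount m L M N (2 ^ (card coords - 1)) = 2 ^ m * 2 ^ m * 2 ^ m - 2 ^ (3 * m - card coords)"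
    unfolding Zcount_def using finite_vecs
    by (simp add: card_Diff_subset finite_subset card_cartesian_product card_vecs card_code_kernel)
  also have "(2::nat) ^ m * 2 ^ m * 2 ^ m = 2 ^ (3 * m - card coords) * 2 ^ card coords"
    using card_supports_le by (simp add: card_coords flip: power_add)
  finally show ?thesis by (simp add: diff_mult_distrib2)
qed

end

theorem mainTheorem8:
  fixes m :: nat and L M N :: "nat set"
  assumes "L \<subseteq> {1..m}" "M \<subseteq> {1..m}" "N \<subseteq> {1..m}"
    and "L \<noteq> {}" "M \<noteq> {}" "N \<noteq> {}"
  defines "s \<equiv> card L + card M + card N"
  shows "is_nkd_code (D2star m L M N) (code m L M N) (2 ^ s - 1) s (2 ^ (s - 1))
    \<and> one_weight (code m L M N)
    \<and> card {c \<in> code m L M N. wt c = 0} = 1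
    \<and> card {c \<in> code m L M N. wt c = 2 ^ (s - 1)} = 2 ^ s - 1
    \<and> minimal_code (code m L M N)
    \<and> griesmer (2 ^ s - 1) s (2 ^ (s - 1))
    \<and> distance_optimal (2 ^ s - 1) s (2 ^ (s - 1))
    \<and> Zcount m L M N 0 = 2 ^ (3 * m - s)
    \<and> Zcount m L M N (2 ^ (s - 1)) = 2 ^ (3 * m - s) * (2 ^ s - 1)"
proof -
  interpret subfield_code m L M N
    using assms(1-3) by unfold_locales
  have s: "s = card coords" unfolding s_def card_coords ..
  have "coords \<noteq> {}" using assms(4) unfolding coords_def by simp
  then have "1 \<le> s" unfolding s using finite_coords by (simp add: Suc_leI card_gt_0_iff)
  then show ?thesis
    unfolding s
    using code_is_nkd[OF \<open>coords \<noteq> {}\<close>] one_weight_code card_code_weight_zero card_code_weight_nonzero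
      minimal_code_code griesmer_simplex distance_optimal_simplex Zcount_zero Zcount_nonzero
    by blast
qed

end
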